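(* Let $n,m\in\mathbb{N}$, $\nu\ge 0$, and let $f_n$, $g_m$ be polynomials of degree at most $n$ and $m$, respectively. If $$f_n(x)\rho_\nu(x)+g_m(x)\rho_{\nu+1}(x)=0\quad\text{for all } x>0,$$ then $f_n\equiv 0$ and $g_m\equiv 0$.
   Context: For $\nu\in\mathbb{R}$ and $x>0$, $\rho_\nu(x)=2x^{\nu/2}K_\nu(2\sqrt{x})$ is the scaled Macdonald function, where $K_\nu$ is the modified Bessel function of the second kind. Equivalently, $\rho_\nu(x)=\int_0^\infty t^{\nu-1}e^{-t-x/t}\,dt$. *)

theory Defs
  imports "HOL-Analysis.Analysis" "HOL-Computational_Algebra.Polynomial"
begin

text \<open>Scaled Macdonald function, via its integral representation
  rho_nu(x) = int_0^infty t^(nu-1) exp(-t - x/t) dt  (x > 0).\<close>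
definition rho :: "real \<Rightarrow> real \<Rightarrow> real" where
  "rho \<nu> x = (LBINT t:{0<..}. t powr (\<nu> - 1) * exp (- t - x / t))"

end

theory Submission
  imports Defs "HOL-Real_Asymp.Real_Asymp"
begin

text \<open>Differentiating under the integral sign gives rho' \<nu> = - rho (\<nu> - 1), and integrating the
  derivative of t powr \<nu> * exp (- t - x / t) over (0, \<infinity>) gives the recurrence
  rho (\<nu> + 1) = \<nu> * rho \<nu> + x * rho (\<nu> - 1).  Hence r = rho (\<nu> + 1) / rho \<nu> satisfies the
  Riccati equation x r' = r^2 - \<nu> r - x.  If f rho \<nu> + g rho (\<nu> + 1) vanishes, then r = - f / g
  is a rational solution, and clearing denominators yields a polynomial identity whose coefficient
  of degree 2 deg f (if deg g < deg f) or 2 deg g + 1 (otherwise) is plus or minus the square of a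
  leading coefficient; so f = g = 0.\<close>

lemma exp_neg_le_powr:
  fixes u s :: real
  assumes "u > 0" "s > 0"
  shows "exp (- u) \<le> (s / u) powr s"
proof -
  have "(u / s) powr s \<le> exp (u / s) powr s"
    using assms by (intro powr_mono2) (auto intro: order_trans[OF _ exp_ge_add_one_self])
  also have "\<dots> = exp u"
    using assms by (simp add: powr_def)
  finally have "1 / exp u \<le> 1 / (u / s) powr s"
    using assms by (intro divide_left_mono) auto
  also have "1 / (u / s) powr s = (s / u) powr s"
    using assms by (simp add: powr_divide)
  finally show ?thesis
    by (simp add: exp_minus divide_inverse)
qed

lemma abs_exp_neg_diff_le:
  fixes p q m :: real
  assumes "m \<le> p" "m \<le> q"
  shows "\<bar>exp (- p) - exp (- q)\<bar> \<le> \<bar>p - q\<bar> * exp (- m)"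
proof -
  have "\<bar>exp (- p) - exp (- q)\<bar> \<le> \<bar>p - q\<bar> * exp (- m)" if "m \<le> p" "p < q" for p q
  proof -
    have "((\<lambda>t. exp (- t)) has_real_derivative - exp (- t)) (at t)" for t
      by (auto intro!: derivative_eq_intros)
    then obtain z where z: "p < z" "exp (- q) - exp (- p) = (q - p) * - exp (- z)"
      using MVT2[OF \<open>p < q\<close>, of "\<lambda>t. exp (- t)" "\<lambda>t. - exp (- t)"] by blast
    have "exp (- p) - exp (- q) = (q - p) * exp (- z)"
      using z(2) by simp
    also have "\<dots> \<le> (q - p) * exp (- m)"
      using z(1) \<open>m \<le> p\<close> \<open>p < q\<close> by (intro mult_left_mono) auto
    finally show ?thesis
      using \<open>p < q\<close> by (simp add: abs_if)
  qed
  then show ?thesis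
    using assms by (cases p q rule: linorder_cases) (auto simp: abs_minus_commute)
qed

lemma set_integral_Ioi_pos:
  fixes f :: "real \<Rightarrow> real"
  assumes "set_integrable lborel {a<..} f" "\<And>t. t > a \<Longrightarrow> f t > 0"
  shows "(LBINT t:{a<..}. f t) > 0"
proof -
  let ?f = "\<lambda>t. indicator {a<..} t *\<^sub>R f t"
  have int: "integrable lborel ?f"
    using assms(1) by (simp add: set_integrable_def)
  have nonneg: "AE t in lborel. 0 \<le> ?f t"
    using assms(2) by (intro AE_I2) (auto simp: indicator_def less_imp_le)
  have "integral\<^sup>L lborel ?f \<noteq> 0"
  proof
    have pos: "?f t \<noteq> 0" if "t \<in> {a + 1..a + 2}" for t
      using assms(2)[of t] that by simp
    assume "integral\<^sup>L lborel ?f = 0"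
    then have "AE t in lborel. ?f t = 0"
      using integral_nonneg_eq_0_iff_AE[OF int nonneg] by blast
    then have "AE t in lborel. t \<notin> {a + 1..a + 2}"
      by (rule eventually_mono) (use pos in blast)
    then have "emeasure lborel {a + 1..a + 2} = 0"
      by (subst (asm) AE_iff_measurable[of "{a + 1..a + 2}"]) auto
    then show False
      by simp
  qed
  moreover have "integral\<^sup>L lborel ?f \<ge> 0"
    using nonneg by (rule integral_nonneg_AE)
  ultimately show ?thesis
    by (simp add: set_lebesgue_integral_def)
qed

lemma Gamma_integrand_set_integrable:
  fixes c :: real
  assumes "c > -1"
  shows "set_integrable lborel {0<..} (\<lambda>t. t powr c * exp (- t))"
proof -
  have "((\<lambda>t. t powr c / exp t) has_integral Gamma (c + 1)) {0..}"
    using Gamma_integral_real[of "c + 1"] assms by simp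
  then have "(\<lambda>t. t powr c / exp t) integrable_on {0..}"
    by blast
  then have "(\<lambda>t. t powr c / exp t) integrable_on {0<..}"
    by (rule integrable_spike_set) (auto intro: negligible_subset[of "{0}"])
  then have "(\<lambda>t. t powr c / exp t) absolutely_integrable_on {0<..}"
    by (rule nonnegative_absolutely_integrable_1) auto
  then have "set_integrable lebesgue {0<..} (\<lambda>t. t powr c * exp (- t))"
    by (simp add: exp_minus field_simps)
  then show ?thesis
    unfolding set_integrable_def
    by (subst (asm) integrable_completion)
       (auto intro!: borel_measurable_continuous_on_indicator continuous_intros)
qed

definition rho_kernel :: "real \<Rightarrow> real \<Rightarrow> real \<Rightarrow> real" where
  "rho_kernel \<nu> x t = t powr (\<nu> - 1) * exp (- t - x / t)"

lemma rho_eq_set_integral_kernel: "rho \<nu> x = (LBINT t:{0<..}. rho_kernel \<nu> x t)"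
  by (simp add: rho_def rho_kernel_def)

lemma rho_kernel_pos: "t > 0 \<Longrightarrow> rho_kernel \<nu> x t > 0"
  by (simp add: rho_kernel_def)

lemma rho_kernel_set_borel_measurable: "set_borel_measurable lborel {0<..} (rho_kernel \<nu> x)"
  unfolding set_borel_measurable_def rho_kernel_def measurable_lborel2
  by (intro borel_measurable_continuous_on_indicator) (auto intro!: continuous_intros)

text \<open>The factor exp (- x / t) \<le> (s / x) powr s * t powr s absorbs the possibly non-integrable
  singularity of t powr (\<nu> - 1) at 0, leaving a Gamma integrand.\<close>

lemma rho_kernel_set_integrable:
  assumes "x > 0"
  shows "set_integrable lborel {0<..} (rho_kernel \<nu> x)"
proof -
  define s where "s = \<bar>\<nu> - 1\<bar> + 1"
  have s: "s > 0" "\<nu> - 1 + s > -1"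
    by (auto simp: s_def)
  have "rho_kernel \<nu> x t \<le> (s / x) powr s * (t powr (\<nu> - 1 + s) * exp (- t))" if "t > 0" for t
  proof -
    have "rho_kernel \<nu> x t = t powr (\<nu> - 1) * exp (- t) * exp (- (x / t))"
      by (simp add: rho_kernel_def flip: exp_add)
    also have "\<dots> \<le> t powr (\<nu> - 1) * exp (- t) * ((s / (x / t)) powr s)"
      using exp_neg_le_powr[of "x / t" s] assms that s by (intro mult_left_mono) auto
    also have "\<dots> = (s / x) powr s * (t powr (\<nu> - 1 + s) * exp (- t))"
      using assms that s by (simp add: powr_add powr_divide powr_mult)
    finally show ?thesis .
  qed
  then have "AE t in lborel. t \<in> {0<..} \<longrightarrow>
      norm (rho_kernel \<nu> x t) \<le> norm ((s / x) powr s * (t powr (\<nu> - 1 + s) * exp (- t)))"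
    by (intro AE_I2 impI) (simp add: abs_of_pos rho_kernel_pos)
  moreover have "set_integrable lborel {0<..} (\<lambda>t. (s / x) powr s * (t powr (\<nu> - 1 + s) * exp (- t)))"
    using Gamma_integrand_set_integrable[OF s(2)] by (rule set_integrable_mult_right)
  ultimately show ?thesis
    using set_integrable_bound rho_kernel_set_borel_measurable by blast
qed

lemma rho_pos: "x > 0 \<Longrightarrow> rho \<nu> x > 0"
  unfolding rho_eq_set_integral_kernel
  by (intro set_integral_Ioi_pos rho_kernel_set_integrable rho_kernel_pos) auto

lemma rho_recurrence:
  assumes "x > 0"
  shows "rho (\<nu> + 1) x = \<nu> * rho \<nu> x + x * rho (\<nu> - 1) x"
proof -
  define F where "F t = t powr \<nu> * exp (- t - x / t)" for t
  define F' where "F' t = \<nu> * rho_kernel \<nu> x t - rho_kernel (\<nu> + 1) x t + x * rho_kernel (\<nu> - 1) x t"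
    for t
  have integrable: "set_integrable lborel {0<..} F'"
    unfolding F'_def using rho_kernel_set_integrable[OF assms]
    by (intro set_integral_add set_integral_diff set_integrable_mult_right) auto
  have "(LBINT t=ereal 0..\<infinity>. F' t) = 0 - 0"
  proof (rule interval_integral_FTC_integrable)
    fix t assume "ereal 0 < ereal t" "ereal t < \<infinity>"
    then have t: "t > 0"
      by simp
    have "t powr (\<nu> - 2) = t powr \<nu> / (t * t)"
      using t by (simp add: powr_diff powr_numeral power2_eq_square)
    then have "(F has_real_derivative F' t) (at t)"
      unfolding F_def F'_def rho_kernel_def using t
      by (auto intro!: derivative_eq_intros simp: field_simps)
    then show "(F has_vector_derivative F' t) (at t)"
      by (simp add: has_real_derivative_iff_has_vector_derivative)
    show "isCont F' t"
      unfolding F'_def rho_kernel_def using t by (auto intro!: continuous_intros)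
  next
    show "((F \<circ> real_of_ereal) \<longlongrightarrow> 0) (at_right (ereal 0))"
      unfolding ereal_tendsto_simps1 F_def using assms by real_asymp
    show "((F \<circ> real_of_ereal) \<longlongrightarrow> 0) (at_left \<infinity>)"
      unfolding ereal_tendsto_simps1 F_def using assms by real_asymp
  qed (use integrable in simp_all)
  then have "(LBINT t:{0<..}. F' t) = 0"
    by (simp add: interval_lebesgue_integral_def)
  moreover have "(LBINT t:{0<..}. F' t) = \<nu> * rho \<nu> x - rho (\<nu> + 1) x + x * rho (\<nu> - 1) x"
    unfolding F'_def rho_eq_set_integral_kernel using rho_kernel_set_integrable[OF assms]
    by (subst set_integral_add set_integral_diff;
        (intro set_integral_add set_integral_diff set_integrable_mult_right)?; auto)+
  ultimately show ?thesis
    by simp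
qed

lemma rho_kernel_has_real_derivative:
  assumes "t > 0"
  shows "((\<lambda>y. rho_kernel \<nu> y t) has_real_derivative - rho_kernel (\<nu> - 1) x t) (at x)"
proof -
  have "t powr (\<nu> - 1 - 1) = t powr (\<nu> - 1) / t"
    using assms by (simp add: powr_diff power2_eq_square)
  then show ?thesis
    unfolding rho_kernel_def using assms
    by (auto intro!: derivative_eq_intros simp: field_simps)
qed

lemma rho_kernel_diff_quotient_le:
  assumes "0 < x0" "x0 \<le> x" "x0 \<le> y" "t > 0"
  shows "\<bar>(rho_kernel \<nu> y t - rho_kernel \<nu> x t) / (y - x)\<bar> \<le> rho_kernel (\<nu> - 1) x0 t"
proof -
  have kernel: "rho_kernel \<mu> z t = t powr (\<mu> - 1) * exp (- t) * exp (- (z / t))" for \<mu> z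
    by (simp add: rho_kernel_def flip: exp_add)
  have "\<bar>exp (- (y / t)) - exp (- (x / t))\<bar> \<le> \<bar>y / t - x / t\<bar> * exp (- (x0 / t))"
    using assms by (intro abs_exp_neg_diff_le) (auto intro: divide_right_mono)
  also have "\<bar>y / t - x / t\<bar> = \<bar>y - x\<bar> / t"
    using assms by (simp add: diff_divide_distrib[symmetric])
  finally have "\<bar>exp (- (y / t)) - exp (- (x / t))\<bar> / \<bar>y - x\<bar> \<le> exp (- (x0 / t)) / t"
    using assms by (cases "y = x") (simp_all add: field_simps)
  have "\<bar>(rho_kernel \<nu> y t - rho_kernel \<nu> x t) / (y - x)\<bar>
      = t powr (\<nu> - 1) * exp (- t) * (\<bar>exp (- (y / t)) - exp (- (x / t))\<bar> / \<bar>y - x\<bar>)"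
    by (simp add: kernel abs_mult flip: right_diff_distrib)
  also have "\<dots> \<le> t powr (\<nu> - 1) * exp (- t) * (exp (- (x0 / t)) / t)"
    using \<open>\<bar>exp (- (y / t)) - exp (- (x / t))\<bar> / \<bar>y - x\<bar> \<le> exp (- (x0 / t)) / t\<close>
    by (intro mult_left_mono) auto
  also have "\<dots> = rho_kernel (\<nu> - 1) x0 t"
    using assms by (simp add: kernel powr_diff power2_eq_square)
  finally show ?thesis .
qed

lemma rho_has_real_derivative:
  assumes "x > 0"
  shows "(rho \<nu> has_real_derivative - rho (\<nu> - 1) x) (at x)"
proof -
  define x0 where "x0 = x / 2"
  have x0: "0 < x0" "x0 < x"
    using assms by (auto simp: x0_def)
  define q where "q y = (\<lambda>t. indicator {0<..} t *\<^sub>R ((rho_kernel \<nu> y t - rho_kernel \<nu> x t) / (y - x)))"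
    for y
  have quotient: "(rho \<nu> y - rho \<nu> x) / (y - x) = integral\<^sup>L lborel (q y)" if "y > x0" for y
  proof -
    have "(rho \<nu> y - rho \<nu> x) / (y - x)
        = (LBINT t:{0<..}. (rho_kernel \<nu> y t - rho_kernel \<nu> x t) / (y - x))"
      using rho_kernel_set_integrable[of x] rho_kernel_set_integrable[of y] assms that x0
      by (simp add: rho_eq_set_integral_kernel)
    then show ?thesis
      unfolding q_def set_lebesgue_integral_def .
  qed
  have "((\<lambda>y. (rho \<nu> y - rho \<nu> x) / (y - x)) \<longlongrightarrow> - rho (\<nu> - 1) x) (at x within {x0<..})"
  proof (subst tendsto_at_iff_sequentially, intro allI impI)
    fix X :: "nat \<Rightarrow> real"
    assume X: "\<forall>i. X i \<in> {x0<..} - {x}" "X \<longlonglongrightarrow> x"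
    then have X_gt: "X i > x0" and X_ne: "X i \<noteq> x" for i
      by auto
    have "(\<lambda>i. integral\<^sup>L lborel (q (X i)))
        \<longlonglongrightarrow> integral\<^sup>L lborel (\<lambda>t. indicator {0<..} t *\<^sub>R - rho_kernel (\<nu> - 1) x t)"
    proof (rule integral_dominated_convergence)
      show "integrable lborel (\<lambda>t. indicator {0<..} t *\<^sub>R rho_kernel (\<nu> - 1) x0 t)"
        using rho_kernel_set_integrable[OF x0(1)] by (simp add: set_integrable_def)
      show "(\<lambda>t. indicator {0<..} t *\<^sub>R - rho_kernel (\<nu> - 1) x t) \<in> borel_measurable lborel"
        using rho_kernel_set_borel_measurable by (simp add: set_borel_measurable_def)
      show "q (X i) \<in> borel_measurable lborel" for i
        unfolding q_def rho_kernel_def measurable_lborel2 using X_ne[of i]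
        by (intro borel_measurable_continuous_on_indicator) (auto intro!: continuous_intros)
      show "AE t in lborel. (\<lambda>i. q (X i) t) \<longlonglongrightarrow> indicator {0<..} t *\<^sub>R - rho_kernel (\<nu> - 1) x t"
      proof (intro AE_I2)
        fix t :: real
        show "(\<lambda>i. q (X i) t) \<longlonglongrightarrow> indicator {0<..} t *\<^sub>R - rho_kernel (\<nu> - 1) x t"
        proof (cases "t > 0")
          case True
          then have "((\<lambda>y. (rho_kernel \<nu> y t - rho_kernel \<nu> x t) / (y - x))
              \<longlongrightarrow> - rho_kernel (\<nu> - 1) x t) (at x)"
            using rho_kernel_has_real_derivative by (simp add: has_field_derivative_iff)
          then show ?thesis
            using X True by (simp add: q_def tendsto_at_iff_sequentially o_def)
        qed (simp add: q_def)
      qed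
      show "AE t in lborel. norm (q (X i) t) \<le> indicator {0<..} t *\<^sub>R rho_kernel (\<nu> - 1) x0 t" for i
      proof (intro AE_I2)
        fix t :: real
        show "norm (q (X i) t) \<le> indicator {0<..} t *\<^sub>R rho_kernel (\<nu> - 1) x0 t"
          using rho_kernel_diff_quotient_le[of x0 x "X i" t \<nu>] X_gt[of i] x0
          by (cases "t > 0") (simp_all add: q_def)
      qed
    qed
    moreover have "integral\<^sup>L lborel (\<lambda>t. indicator {0<..} t *\<^sub>R - rho_kernel (\<nu> - 1) x t)
        = - rho (\<nu> - 1) x"
      by (simp add: rho_eq_set_integral_kernel set_lebesgue_integral_def)
    ultimately show "((\<lambda>y. (rho \<nu> y - rho \<nu> x) / (y - x)) \<circ> X) \<longlonglongrightarrow> - rho (\<nu> - 1) x"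
      using X(1) by (simp add: o_def quotient)
  qed
  moreover have "at x within {x0<..} = at x"
    using x0 by (intro at_within_open) auto
  ultimately show ?thesis
    by (simp add: has_field_derivative_iff)
qed

lemma poly_eq_0_if_vanishes_on_Ioi:
  fixes p :: "real poly"
  assumes "\<And>x. x > a \<Longrightarrow> poly p x = 0"
  shows "p = 0"
proof (rule ccontr)
  assume "p \<noteq> 0"
  then have "finite {x. poly p x = 0}"
    by (rule poly_roots_finite)
  moreover have "{a<..} \<subseteq> {x. poly p x = 0}"
    using assms by auto
  ultimately show False
    using infinite_Ioi finite_subset by blast
qed

lemma degree_pCons_0_pderiv_mult_le:
  fixes p q :: "'a::{comm_semiring_1, semiring_no_zero_divisors, semiring_char_0} poly"
  shows "degree (pCons 0 (pderiv p * q)) \<le> degree p + degree q"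
proof (cases "pderiv p * q = 0")
  case False
  then have "degree p \<ge> 1"
    by (auto simp: pderiv_eq_0_iff)
  have "degree (pCons 0 (pderiv p * q)) \<le> Suc (degree (pderiv p * q))"
    by (rule degree_pCons_le)
  also have "degree (pderiv p * q) \<le> degree (pderiv p) + degree q"
    by (rule degree_mult_le)
  finally show ?thesis
    using \<open>degree p \<ge> 1\<close> by (simp add: degree_pderiv)
qed simp

text \<open>The Riccati equation x r' = r^2 - \<nu> r - x at r = - f / g, multiplied by g^2.\<close>

definition riccati_poly :: "real \<Rightarrow> real poly \<Rightarrow> real poly \<Rightarrow> real poly" where
  "riccati_poly \<nu> f g =
     f * f + smult \<nu> (f * g) + pCons 0 (pderiv f * g - pderiv g * f) - pCons 0 (g * g)"

lemma riccati_poly_eq_0_iff: "riccati_poly \<nu> f g = 0 \<longleftrightarrow> f = 0 \<and> g = 0"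
proof
  assume Q: "riccati_poly \<nu> f g = 0"
  have deg_ff: "degree (f * f) \<le> degree f + degree f"
    by (rule degree_mult_le)
  have deg_fg: "degree (smult \<nu> (f * g)) \<le> degree f + degree g"
    using degree_smult_le[of \<nu> "f * g"] degree_mult_le[of f g] by linarith
  have deg_wronskian: "degree (pCons 0 (pderiv f * g - pderiv g * f)) \<le> degree f + degree g"
    using degree_diff_le[OF degree_pCons_0_pderiv_mult_le[of f g]
        degree_pCons_0_pderiv_mult_le[of g f, unfolded add.commute[of "degree g"]]]
    by simp
  have deg_xgg: "degree (pCons 0 (g * g)) \<le> Suc (degree g + degree g)"
    using degree_pCons_le[of 0 "g * g"] degree_mult_le[of g g] by linarith
  consider "g = 0" | "g \<noteq> 0" "degree g < degree f" | "g \<noteq> 0" "degree f \<le> degree g"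
    by linarith
  then show "f = 0 \<and> g = 0"
  proof cases
    case 1
    then show ?thesis
      using Q by (simp add: riccati_poly_def)
  next
    case 2
    let ?n = "degree f + degree f"
    have "coeff (smult \<nu> (f * g)) ?n = 0" "coeff (pCons 0 (pderiv f * g - pderiv g * f)) ?n = 0"
      "coeff (pCons 0 (g * g)) ?n = 0"
      by (intro coeff_eq_0; use 2 deg_fg deg_wronskian deg_xgg in linarith)+
    then have "coeff (riccati_poly \<nu> f g) ?n = coeff (f * f) ?n"
      by (simp add: riccati_poly_def)
    also have "\<dots> = lead_coeff f * lead_coeff f"
      by (rule coeff_mult_degree_sum)
    finally show ?thesis
      using Q 2 by auto
  next
    case 3
    let ?n = "Suc (degree g + degree g)"
    have "coeff (f * f) ?n = 0" "coeff (smult \<nu> (f * g)) ?n = 0"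
      "coeff (pCons 0 (pderiv f * g - pderiv g * f)) ?n = 0"
      by (intro coeff_eq_0; use 3 deg_ff deg_fg deg_wronskian in linarith)+
    then have "coeff (riccati_poly \<nu> f g) ?n = - coeff (g * g) (degree g + degree g)"
      by (simp add: riccati_poly_def)
    also have "\<dots> = - (lead_coeff g * lead_coeff g)"
      by (simp add: coeff_mult_degree_sum)
    finally show ?thesis
      using Q 3 by auto
  qed
qed (simp add: riccati_poly_def)

lemma riccati_poly_vanishes:
  assumes zero: "\<forall>y>0. poly f y * rho \<nu> y + poly g y * rho (\<nu> + 1) y = 0" and "x > 0"
  shows "poly (riccati_poly \<nu> f g) x = 0"
proof -
  let ?\<phi> = "\<lambda>y. poly f y * rho \<nu> y + poly g y * rho (\<nu> + 1) y"
  let ?\<phi>' = "poly (pderiv f) x * rho \<nu> x - poly f x * rho (\<nu> - 1) x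
    + (poly (pderiv g) x * rho (\<nu> + 1) x - poly g x * rho \<nu> x)"
  have "(?\<phi> has_real_derivative ?\<phi>') (at x)"
    using DERIV_add[OF DERIV_mult[OF poly_DERIV[of f] rho_has_real_derivative[OF \<open>x > 0\<close>]]
        DERIV_mult[OF poly_DERIV[of g] rho_has_real_derivative[OF \<open>x > 0\<close>]], of \<nu> "\<nu> + 1"]
    by (simp add: algebra_simps)
  moreover have "(?\<phi> has_real_derivative 0) (at x)"
    by (rule has_field_derivative_transform_within_open[of "\<lambda>_. 0" 0 x "{0<..}"])
       (use assms in auto)
  ultimately have "?\<phi>' = 0"
    by (rule DERIV_unique)
  moreover have "?\<phi> x = 0"
    using zero \<open>x > 0\<close> by blast
  moreover have "rho (\<nu> + 1) x - \<nu> * rho \<nu> x - x * rho (\<nu> - 1) x = 0"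
    using rho_recurrence[OF \<open>x > 0\<close>] by simp
  moreover have "poly (riccati_poly \<nu> f g) x * rho \<nu> x
      = x * poly g x * ?\<phi>' + (poly f x - x * poly (pderiv g) x) * ?\<phi> x
        - poly f x * poly g x * (rho (\<nu> + 1) x - \<nu> * rho \<nu> x - x * rho (\<nu> - 1) x)"
    by (simp add: riccati_poly_def algebra_simps)
  ultimately show ?thesis
    using rho_pos[OF \<open>x > 0\<close>, of \<nu>] by simp
qed

theorem lemma1:
  fixes n m :: nat and \<nu> :: real and f g :: "real poly"
  assumes "\<nu> \<ge> 0"
    and "degree f \<le> n" and "degree g \<le> m"
    and "\<forall>x>0. poly f x * rho \<nu> x + poly g x * rho (\<nu> + 1) x = 0"
  shows "f = 0 \<and> g = 0"
proof -
  have "riccati_poly \<nu> f g = 0"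
    using riccati_poly_vanishes[OF assms(4)] by (rule poly_eq_0_if_vanishes_on_Ioi)
  then show ?thesis
    by (simp add: riccati_poly_eq_0_iff)
qed

end
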